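(* Let $0<s_1<s_2$, $m\ge 2$, $N=4m+1$, and let $\mathcal C\in\mathbb R^{N\times N}$ be the defect capacitance matrix. For a square matrix $M$ write $\chi_M(x)=\det(xI-M)$, and put $z=x-\alpha$. Then $$\chi_{\mathcal C}(x)=\chi_{A_{2m}^{(\beta_2,0)}(\alpha,\beta_1,\beta_2)}(x)\cdot\Big(\big[(z-\beta_1)P_m^*(x)+\big(\beta_2(\beta_1-\beta_2)z-\beta_2\beta_1^2-(\beta_1-\beta_2)\beta_2^2\big)P_{m-1}^*(x)\big]-\beta_2^2\big[(z-\beta_2)P_{m-1}^*(x)-\beta_2\beta_1^2P_{m-2}^*(x)\big]\Big).$$ Equivalently, $\chi_{\mathcal C}=\chi_{A_{2m+1}^{(\beta_2,\beta_1-\beta_2)}(\alpha,\beta_1,\beta_2)}\,\chi_{A_{2m}^{(0,\beta_2)}(\alpha,\beta_1,\beta_2)}-\beta_2^2\,\chi_{A_{2m}^{(\beta_2,0)}(\alpha,\beta_1,\beta_2)}\,\chi_{A_{2m-1}^{(0,\beta_2)}(\alpha,\beta_2,\beta_1)}$, where the matrices $A_{2m}^{(0,\beta_2)}(\alpha,\beta_1,\beta_2)$ and $A_{2m}^{(\beta_2,0)}(\alpha,\beta_1,\beta_2)$ have the same characteristic polynomial.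
   Context: Set $\alpha=\frac1{s_1}+\frac1{s_2}$, $\beta_1=-\frac1{s_1}$, $\beta_2=-\frac1{s_2}$, $\eta=\frac{2}{s_2}$. The defect capacitance matrix $\mathcal C=\mathcal C_N$ ($N=4m+1$) is the real symmetric tridiagonal matrix with diagonal entries $\mathcal C_{11}=\mathcal C_{NN}=\frac1{s_1}$, $\mathcal C_{2m+1,2m+1}=\eta$, and $\mathcal C_{ii}=\alpha$ otherwise, and off-diagonal entries $\mathcal C_{i,i+1}=\mathcal C_{i+1,i}$ equal to $\beta_1$ for $i$ odd and $\beta_2$ for $i$ even when $1\le i\le 2m$, and equal to $\beta_2$ for $i$ odd and $\beta_1$ for $i$ even when $2m+1\le i\le 4m$. (It is the capacitance matrix of $4m+1$ resonators whose spacings alternate $s_1,s_2,\dots$ up to the centre resonator and are mirrored afterwards.) For reals $\alpha,\beta_1,\beta_2,a,b$: $A_{2k+1}^{(a,b)}(\alpha,\beta_1,\beta_2)\in\mathbb R^{(2k+1)\times(2k+1)}$ is the symmetric tridiagonal matrix with diagonal $(\alpha+a,\alpha,\dots,\alpha,\alpha+b)$ and $(i,i+1)$ off-diagonal entries $\beta_1$ for $i$ odd, $\beta_2$ for $i$ even ($1\le i\le 2k$); $A_{2k}^{(a,b)}(\alpha,\beta_1,\beta_2)\in\mathbb R^{2k\times 2k}$ is defined in the same way with size $2k$ (first and last off-diagonal entries $\beta_1$). With $U_k$ the Chebyshev polynomials of the second kind, $P_k^*(x):=(\beta_1\beta_2)^kU_k\!\Big(\frac{(x-\alpha)^2-\beta_1^2-\beta_2^2}{2\beta_1\beta_2}\Big)$.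 *)

theory Defs
  imports "Jordan_Normal_Form.Char_Poly"
begin

fun chebU :: "nat \<Rightarrow> real \<Rightarrow> real" where
  "chebU 0 t = 1"
| "chebU (Suc 0) t = 2 * t"
| "chebU (Suc (Suc k)) t = 2 * t * chebU (Suc k) t - chebU k t"

definition Pstar :: "real \<Rightarrow> real \<Rightarrow> real \<Rightarrow> nat \<Rightarrow> real \<Rightarrow> real" where
  "Pstar \<alpha> \<beta>1 \<beta>2 k x =
     (\<beta>1 * \<beta>2) ^ k * chebU k (((x - \<alpha>)^2 - \<beta>1^2 - \<beta>2^2) / (2 * \<beta>1 * \<beta>2))"

text \<open>A_n^{(a,b)}(alpha,beta1,beta2): n x n symmetric tridiagonal matrix, diagonal
  (alpha+a, alpha, ..., alpha, alpha+b); the (i,i+1) off-diagonal entry (1-based i)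
  is beta1 for i odd and beta2 for i even. Indices below are 0-based.\<close>
definition Amat :: "nat \<Rightarrow> real \<Rightarrow> real \<Rightarrow> real \<Rightarrow> real \<Rightarrow> real \<Rightarrow> real mat" where
  "Amat n a b \<alpha> \<beta>1 \<beta>2 = mat n n (\<lambda>(i, j).
     if i = j then \<alpha> + (if i = 0 then a else 0) + (if i = n - 1 then b else 0)
     else if i + 1 = j \<or> j + 1 = i then (if even (min i j) then \<beta>1 else \<beta>2)
     else 0)"

definition defect_cap :: "real \<Rightarrow> real \<Rightarrow> nat \<Rightarrow> real mat" where
  "defect_cap s1 s2 m = (let N = 4 * m + 1; \<alpha> = 1/s1 + 1/s2; \<beta>1 = - 1/s1; \<beta>2 = - 1/s2;
     \<eta> = 2/s2 in
     mat N N (\<lambda>(i, j).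
       if i = j then (if i = 0 \<or> i = N - 1 then 1/s1 else if i = 2 * m then \<eta> else \<alpha>)
       else if i + 1 = j \<or> j + 1 = i then
         (if min i j < 2 * m then (if even (min i j) then \<beta>1 else \<beta>2)
          else (if even (min i j) then \<beta>2 else \<beta>1))
       else 0))"

end

theory Submission
  imports Defs
begin

text \<open>Every matrix involved is symmetric tridiagonal, so each characteristic polynomial is a
  continuant, i.e.\ satisfies the three-term recurrence of cofactor expansion along the last row.
  Expanding the continuant of the defect matrix at the centre resonator splits it into the
  products of continuants of the two halves; reversing a half of even length shows the two
  halves have the same characteristic polynomial. With constant diagonal and alternating
  off-diagonal entries, two steps of the recurrence give the Chebyshev recurrence of \<open>P\<^sup>*\<^sub>k\<close>,
  which evaluates the remaining continuants.\<close>

definition tridiag :: "nat \<Rightarrow> (nat \<Rightarrow> 'a::comm_ring_1) \<Rightarrow> (nat \<Rightarrow> 'a) \<Rightarrow> 'a mat" where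
  "tridiag n d e = mat n n (\<lambda>(i, j).
     if i = j then d i else if i + 1 = j then e i else if j + 1 = i then e j else 0)"

fun continuant :: "(nat \<Rightarrow> 'a::comm_ring_1) \<Rightarrow> (nat \<Rightarrow> 'a) \<Rightarrow> nat \<Rightarrow> 'a" where
  "continuant d e 0 = 1"
| "continuant d e (Suc 0) = d 0"
| "continuant d e (Suc (Suc n)) = d (Suc n) * continuant d e (Suc n) - e n * e n * continuant d e n"

lemma tridiag_carrier [simp]: "tridiag n d e \<in> carrier_mat n n"
  unfolding tridiag_def by auto

lemma det_tridiag: "det (tridiag n d e) = continuant d e n"
proof (induction d e n rule: continuant.induct)
  case (1 d e)
  then show ?case by (simp add: tridiag_def)
next
  case (2 d e)
  have "det (tridiag 1 d e) = (\<Sum>j<1. tridiag 1 d e $$ (0, j) * cofactor (tridiag 1 d e) 0 j)"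
    by (rule laplace_expansion_row) auto
  then show ?case by (simp add: tridiag_def cofactor_def mat_delete_def)
next
  case (3 d e n)
  let ?A = "tridiag (Suc (Suc n)) d e"
  define B where "B = mat_delete ?A (Suc n) n"
  have B_carrier: "B \<in> carrier_mat (Suc n) (Suc n)"
    unfolding B_def mat_delete_def tridiag_def by auto
  have delete_A: "mat_delete ?A (Suc n) (Suc n) = tridiag (Suc n) d e"
    by (rule eq_matI) (auto simp: tridiag_def mat_delete_def)
  have delete_B: "mat_delete B n n = tridiag n d e"
    by (rule eq_matI) (auto simp: B_def tridiag_def mat_delete_def)
  \<comment> \<open>the last column of \<open>B\<close> has the single nonzero entry \<open>e n\<close>\<close>
  have "det B = (\<Sum>i<Suc n. B $$ (i, n) * cofactor B i n)"
    by (rule laplace_expansion_column[OF B_carrier]) auto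
  also have "\<dots> = (\<Sum>i\<in>{n}. B $$ (i, n) * cofactor B i n)"
    by (rule sum.mono_neutral_right) (auto simp: B_def tridiag_def mat_delete_def)
  also have "\<dots> = e n * continuant d e n"
  proof -
    have "B $$ (n, n) = e n" by (simp add: B_def tridiag_def mat_delete_def)
    then show ?thesis using "3.IH"(2) delete_B by (simp add: cofactor_def)
  qed
  finally have det_B: "det B = e n * continuant d e n" .
  have "det ?A = (\<Sum>j<Suc (Suc n). ?A $$ (Suc n, j) * cofactor ?A (Suc n) j)"
    by (rule laplace_expansion_row) auto
  also have "\<dots> = (\<Sum>j\<in>{n, Suc n}. ?A $$ (Suc n, j) * cofactor ?A (Suc n) j)"
    by (rule sum.mono_neutral_right) (auto simp: tridiag_def)
  also have "\<dots> = d (Suc n) * continuant d e (Suc n) - e n * e n * continuant d e n"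
    using "3.IH"(1) det_B delete_A by (simp add: tridiag_def cofactor_def B_def)
  finally show ?case by simp
qed

lemma continuant_cong:
  assumes "\<And>i. i < n \<Longrightarrow> d i = d' i" and "\<And>i. Suc i < n \<Longrightarrow> e i * e i = e' i * e' i"
  shows "continuant d e n = continuant d' e' n"
  using assms
proof (induction d e n rule: continuant.induct)
  case (3 d e n)
  have "continuant d e (Suc n) = continuant d' e' (Suc n)"
    by (rule "3.IH"(1)) (use "3.prems" in auto)
  moreover have "continuant d e n = continuant d' e' n"
    by (rule "3.IH"(2)) (use "3.prems" in auto)
  moreover have "d (Suc n) = d' (Suc n)" and "e n * e n = e' n * e' n"
    using "3.prems" by auto
  ultimately show ?case by simp
qed auto

lemma poly_continuant:
  "poly (continuant d e n) x = continuant (\<lambda>i. poly (d i) x) (\<lambda>i. poly (e i) x) n"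
  by (induction d e n rule: continuant.induct) auto

lemma continuant_split:
  "continuant d e (Suc p + Suc q) =
     continuant d e (Suc p) * continuant (\<lambda>i. d (i + Suc p)) (\<lambda>i. e (i + Suc p)) (Suc q)
     - e p * e p * continuant d e p
         * continuant (\<lambda>i. d (i + Suc (Suc p))) (\<lambda>i. e (i + Suc (Suc p))) q"
proof -
  define T where "T = continuant d e"
  define S where "S = continuant (\<lambda>i. d (i + Suc p)) (\<lambda>i. e (i + Suc p))"
  define R where "R = continuant (\<lambda>i. d (i + Suc (Suc p))) (\<lambda>i. e (i + Suc (Suc p)))"
  have T_rec: "T (Suc (Suc k)) = d (Suc k) * T (Suc k) - e k * e k * T k" for k
    by (simp add: T_def)
  have S_rec: "S (Suc (Suc k)) = d (Suc k + Suc p) * S (Suc k)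
      - e (k + Suc p) * e (k + Suc p) * S k" for k
    by (simp add: S_def)
  have R_rec: "R (Suc (Suc k)) = d (Suc (Suc k) + Suc p) * R (Suc k)
      - e (Suc k + Suc p) * e (Suc k + Suc p) * R k" for k
    by (simp add: R_def)
  let ?split = "\<lambda>q. T (Suc p + Suc q) = T (Suc p) * S (Suc q) - e p * e p * T p * R q"
  \<comment> \<open>both sides satisfy the recurrence in \<open>q\<close>, so two consecutive values are carried along\<close>
  have "?split q \<and> ?split (Suc q)"
  proof (induction q)
    case 0
    have "T (Suc p + Suc (Suc 0)) = d (Suc (Suc p)) * T (Suc p + Suc 0)
        - e (Suc p) * e (Suc p) * T (Suc p)"
      using T_rec[of "Suc p"] by simp
    then show ?case
      using T_rec[of p] by (simp add: S_def R_def algebra_simps)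
  next
    case (Suc q)
    then have IH: "?split q" "?split (Suc q)" by auto
    have "T (Suc p + Suc (Suc (Suc q))) = d (Suc (Suc q) + Suc p) * T (Suc p + Suc (Suc q))
        - e (Suc q + Suc p) * e (Suc q + Suc p) * T (Suc p + Suc q)"
      using T_rec[of "Suc p + Suc q"] by (simp add: add.commute)
    then have "?split (Suc (Suc q))"
      unfolding IH S_rec[of "Suc q"] R_rec[of q] by (simp add: algebra_simps)
    with IH show ?case by blast
  qed
  then show ?thesis unfolding T_def S_def R_def by blast
qed

lemma continuant_Suc_Suc_first:
  "continuant d e (Suc (Suc n)) = d 0 * continuant (\<lambda>i. d (Suc i)) (\<lambda>i. e (Suc i)) (Suc n)
     - e 0 * e 0 * continuant (\<lambda>i. d (Suc (Suc i))) (\<lambda>i. e (Suc (Suc i))) n"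
  using continuant_split[of d e 0 n] by simp

lemma continuant_rev:
  "continuant d e n = continuant (\<lambda>i. d (n - 1 - i)) (\<lambda>i. e (n - 2 - i)) n"
proof (induction n arbitrary: d e rule: less_induct)
  case (less n)
  consider "n < 2" | l where "n = Suc (Suc l)"
    by (metis add_2_eq_Suc' le_add_diff_inverse2 not_less)
  then show ?case
  proof cases
    case 1
    then show ?thesis by (cases n) auto
  next
    case n: 2
    have "continuant (\<lambda>i. d (n - 1 - i)) (\<lambda>i. e (n - 2 - i)) n
        = d (Suc l) * continuant (\<lambda>i. d (Suc l - 1 - i)) (\<lambda>i. e (Suc l - 2 - i)) (Suc l)
          - e l * e l * continuant (\<lambda>i. d (l - 1 - i)) (\<lambda>i. e (l - 2 - i)) l"
      unfolding n continuant_Suc_Suc_first by (simp add: numeral_2_eq_2)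
    also have "\<dots> = continuant d e n"
      using less[of "Suc l" d e] less[of l d e] by (simp add: n)
    finally show ?thesis ..
  qed
qed

lemma continuant_perturb_last:
  assumes "\<And>i. i < n \<Longrightarrow> d i = d' i" and "d n = d' n + c"
  shows "continuant d e (Suc n) = continuant d' e (Suc n) + c * continuant d' e n"
proof (cases n)
  case (Suc k)
  have "continuant d e (Suc k) = continuant d' e (Suc k)" and "continuant d e k = continuant d' e k"
    by (rule continuant_cong; use assms Suc in auto)+
  then show ?thesis using assms(2) Suc by (simp add: algebra_simps)
qed (use assms in simp)

lemma continuant_perturb_first:
  assumes "\<And>i. 0 < i \<Longrightarrow> i \<le> n \<Longrightarrow> d i = d' i" and "d 0 = d' 0 + c"
  shows "continuant d e (Suc n) =
    continuant d' e (Suc n) + c * continuant (\<lambda>i. d' (Suc i)) (\<lambda>i. e (Suc i)) n"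
proof (cases n)
  case (Suc k)
  have "continuant (\<lambda>i. d (Suc i)) (\<lambda>i. e (Suc i)) (Suc k)
      = continuant (\<lambda>i. d' (Suc i)) (\<lambda>i. e (Suc i)) (Suc k)"
   and "continuant (\<lambda>i. d (Suc (Suc i))) (\<lambda>i. e (Suc (Suc i))) k
      = continuant (\<lambda>i. d' (Suc (Suc i))) (\<lambda>i. e (Suc (Suc i))) k"
    by (rule continuant_cong; use assms Suc in auto)+
  then show ?thesis
    unfolding Suc continuant_Suc_Suc_first using assms(2) by (simp add: algebra_simps)
qed (use assms in simp)

lemma Pstar_0 [simp]: "Pstar \<alpha> \<beta>1 \<beta>2 0 x = 1"
  by (simp add: Pstar_def)

lemma Pstar_1:
  assumes "\<beta>1 \<noteq> 0" "\<beta>2 \<noteq> 0"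
  shows "Pstar \<alpha> \<beta>1 \<beta>2 1 x = (x - \<alpha>)^2 - \<beta>1^2 - \<beta>2^2"
  using assms by (simp add: Pstar_def field_simps)

lemma Pstar_Suc_Suc:
  assumes "\<beta>1 \<noteq> 0" "\<beta>2 \<noteq> 0"
  shows "Pstar \<alpha> \<beta>1 \<beta>2 (Suc (Suc k)) x =
    ((x - \<alpha>)^2 - \<beta>1^2 - \<beta>2^2) * Pstar \<alpha> \<beta>1 \<beta>2 (Suc k) x - \<beta>1^2 * \<beta>2^2 * Pstar \<alpha> \<beta>1 \<beta>2 k x"
proof -
  define t where "t = ((x - \<alpha>)^2 - \<beta>1^2 - \<beta>2^2) / (2 * \<beta>1 * \<beta>2)"
  have ht: "2 * t * (\<beta>1 * \<beta>2) = (x - \<alpha>)^2 - \<beta>1^2 - \<beta>2^2"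
    using assms unfolding t_def by (simp add: field_simps)
  have "Pstar \<alpha> \<beta>1 \<beta>2 (Suc (Suc k)) x =
      (\<beta>1 * \<beta>2) ^ Suc (Suc k) * (2 * t * chebU (Suc k) t - chebU k t)"
    unfolding Pstar_def t_def by simp
  also have "\<dots> = (2 * t * (\<beta>1 * \<beta>2)) * ((\<beta>1 * \<beta>2) ^ Suc k * chebU (Suc k) t)
      - (\<beta>1 * \<beta>2)^2 * ((\<beta>1 * \<beta>2) ^ k * chebU k t)"
    by (simp add: algebra_simps power2_eq_square)
  finally show ?thesis
    unfolding ht unfolding Pstar_def t_def[symmetric] by (simp add: power_mult_distrib)
qed

lemma Pstar_swap: "Pstar \<alpha> \<beta>2 \<beta>1 = Pstar \<alpha> \<beta>1 \<beta>2"
  by (simp add: Pstar_def fun_eq_iff algebra_simps)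

lemma continuant_alternating:
  fixes x \<alpha> :: real
  assumes "\<beta>1 \<noteq> 0" "\<beta>2 \<noteq> 0"
  defines "E \<equiv> continuant (\<lambda>_. x - \<alpha>) (\<lambda>i. if even i then -\<beta>1 else -\<beta>2)"
  shows "E (2*k + 1) = (x - \<alpha>) * Pstar \<alpha> \<beta>1 \<beta>2 k x"
    and "E (2*k + 2) = Pstar \<alpha> \<beta>1 \<beta>2 (k + 1) x + \<beta>2^2 * Pstar \<alpha> \<beta>1 \<beta>2 k x"
proof -
  let ?P = "\<lambda>k. Pstar \<alpha> \<beta>1 \<beta>2 k x"
  have E_rec: "E (Suc (Suc n)) = (x - \<alpha>) * E (Suc n) - (if even n then \<beta>1^2 else \<beta>2^2) * E n"
    for n by (simp add: E_def power2_eq_square)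
  have "E (2*k + 1) = (x - \<alpha>) * ?P k \<and> E (2*k + 2) = ?P (k + 1) + \<beta>2^2 * ?P k"
  proof (induction k)
    case 0
    show ?case using Pstar_1[OF assms(1,2)] by (simp add: E_def power2_eq_square)
  next
    case (Suc k)
    then have odd: "E (2*k + 1) = (x - \<alpha>) * ?P k" and even: "E (2*k + 2) = ?P (k + 1) + \<beta>2^2 * ?P k"
      by auto
    have "E (2 * Suc k + 1) = (x - \<alpha>) * E (2*k + 2) - \<beta>2^2 * E (2*k + 1)"
      using E_rec[of "2*k + 1"] by simp
    also have "\<dots> = (x - \<alpha>) * ?P (Suc k)"
      unfolding odd even by (simp add: algebra_simps)
    finally have odd': "E (2 * Suc k + 1) = (x - \<alpha>) * ?P (Suc k)" .
    have "E (2 * Suc k + 2) = (x - \<alpha>) * E (2 * Suc k + 1) - \<beta>1^2 * E (2*k + 2)"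
      using E_rec[of "2*k + 2"] by simp
    also have "\<dots> = ?P (Suc (Suc k)) + \<beta>2^2 * ?P (Suc k)"
      unfolding odd' even Pstar_Suc_Suc[OF assms(1,2), of \<alpha> k x]
      by (simp add: algebra_simps power2_eq_square)
    finally show ?case using odd' by simp
  qed
  then show "E (2*k + 1) = (x - \<alpha>) * ?P k" and "E (2*k + 2) = ?P (k + 1) + \<beta>2^2 * ?P k"
    by blast+
qed

lemma char_poly_Amat:
  "char_poly (Amat n a b \<alpha> \<beta>1 \<beta>2) = continuant
     (\<lambda>i. [:-(\<alpha> + (if i = 0 then a else 0) + (if i = n - 1 then b else 0)), 1:])
     (\<lambda>i. [:-(if even i then \<beta>1 else \<beta>2):]) n"
proof -
  have "char_poly_matrix (Amat n a b \<alpha> \<beta>1 \<beta>2) = tridiag n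
     (\<lambda>i. [:-(\<alpha> + (if i = 0 then a else 0) + (if i = n - 1 then b else 0)), 1:])
     (\<lambda>i. [:-(if even i then \<beta>1 else \<beta>2):])"
    by (rule eq_matI) (auto simp: char_poly_matrix_def Amat_def tridiag_def)
  then show ?thesis by (simp add: char_poly_def det_tridiag)
qed

lemma poly_char_poly_Amat:
  "poly (char_poly (Amat n a b \<alpha> \<beta>1 \<beta>2)) x = continuant
     (\<lambda>i. x - \<alpha> - (if i = 0 then a else 0) - (if i = n - 1 then b else 0))
     (\<lambda>i. if even i then -\<beta>1 else -\<beta>2) n"
  unfolding char_poly_Amat poly_continuant by (rule continuant_cong) auto

lemma char_poly_Amat_swap_ends:
  assumes "even n"
  shows "char_poly (Amat n a b \<alpha> \<beta>1 \<beta>2) = char_poly (Amat n b a \<alpha> \<beta>1 \<beta>2)"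
  unfolding char_poly_Amat
  by (subst continuant_rev, rule continuant_cong)
    (use assms in \<open>cases n; auto\<close>, use assms in \<open>auto simp: even_diff_nat\<close>)

lemma poly_char_poly_Amat_odd:
  assumes "\<beta>1 \<noteq> 0" "\<beta>2 \<noteq> 0" "1 \<le> k"
  shows "poly (char_poly (Amat (2*k + 1) a c \<alpha> \<beta>1 \<beta>2)) x =
    (x - \<alpha> - a - c) * Pstar \<alpha> \<beta>1 \<beta>2 k x
    + (a * c * (x - \<alpha>) - a * \<beta>1^2 - c * \<beta>2^2) * Pstar \<alpha> \<beta>1 \<beta>2 (k - 1) x"
proof -
  obtain j where k: "k = Suc j" using assms(3) by (cases k) auto
  define e where "e = (\<lambda>i::nat. if even i then -\<beta>1 else -\<beta>2)"
  define f where "f = (\<lambda>i::nat. if even i then -\<beta>2 else -\<beta>1)"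
  define d where "d = (\<lambda>i::nat. x - \<alpha> - (if i = 0 then a else 0))"
  let ?E = "continuant (\<lambda>_. x - \<alpha>) e" and ?F = "continuant (\<lambda>_. x - \<alpha>) f"
    and ?P = "\<lambda>k. Pstar \<alpha> \<beta>1 \<beta>2 k x"
  have shift_e: "(\<lambda>i. e (Suc i)) = f" by (auto simp: e_def f_def)
  note E = continuant_alternating[OF assms(1,2), of x \<alpha>, folded e_def]
  note F = continuant_alternating[OF assms(2,1), of x \<alpha>, folded f_def,
      unfolded Pstar_swap[of \<alpha> \<beta>2 \<beta>1]]
  have last: "poly (char_poly (Amat (2*k + 1) a c \<alpha> \<beta>1 \<beta>2)) x =
      continuant d e (Suc (2*k)) + (-c) * continuant d e (2*k)"
    unfolding poly_char_poly_Amat e_def[symmetric] Suc_eq_plus1[symmetric]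
    by (rule continuant_perturb_last) (use k in \<open>auto simp: d_def\<close>)
  have first: "continuant d e (Suc n) = ?E (Suc n) + (-a) * ?F n" for n
    unfolding shift_e[symmetric] by (rule continuant_perturb_first) (auto simp: d_def)
  have "2*k = Suc (2*j + 1)" using k by simp
  then have expansion: "poly (char_poly (Amat (2*k + 1) a c \<alpha> \<beta>1 \<beta>2)) x =
      (?E (2*k + 1) - a * ?F (2*k)) - c * (?E (2*j + 2) - a * ?F (2*j + 1))"
    using last first[of "2*k"] first[of "2*j + 1"] by (simp del: continuant.simps)
  have alternating: "?E (2*k + 1) = (x - \<alpha>) * ?P k" "?E (2*j + 2) = ?P k + \<beta>2^2 * ?P j"
    "?F (2*k) = ?P k + \<beta>1^2 * ?P j" "?F (2*j + 1) = (x - \<alpha>) * ?P j"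
    using E[of k] E[of j] F[of j] by (simp_all add: k del: continuant.simps)
  show ?thesis
    unfolding expansion alternating by (simp add: k algebra_simps)
qed

lemma char_poly_defect_cap_split:
  fixes s1 s2 :: real
  assumes "1 \<le> m"
  defines "\<alpha> \<equiv> 1/s1 + 1/s2" and "\<beta>1 \<equiv> - 1/s1" and "\<beta>2 \<equiv> - 1/s2"
  shows "char_poly (defect_cap s1 s2 m) =
    char_poly (Amat (2*m+1) \<beta>2 (\<beta>1 - \<beta>2) \<alpha> \<beta>1 \<beta>2) * char_poly (Amat (2*m) 0 \<beta>2 \<alpha> \<beta>1 \<beta>2)
    - [:\<beta>2^2:] * (char_poly (Amat (2*m) \<beta>2 0 \<alpha> \<beta>1 \<beta>2) * char_poly (Amat (2*m-1) 0 \<beta>2 \<alpha> \<beta>2 \<beta>1))"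
proof -
  define d where "d = (\<lambda>i. [:-(if i = 0 \<or> i = 4*m then 1/s1 else if i = 2*m then 2/s2
     else 1/s1 + 1/s2), 1:])"
  define e where "e = (\<lambda>i. [:-(if i < 2*m then (if even i then -1/s1 else -1/s2)
     else (if even i then -1/s2 else -1/s1)):])"
  have "char_poly_matrix (defect_cap s1 s2 m) = tridiag (4*m + 1) d e"
    by (rule eq_matI) (auto simp: char_poly_matrix_def defect_cap_def tridiag_def d_def e_def Let_def)
  then have char_poly_C: "char_poly (defect_cap s1 s2 m) = continuant d e (4*m + 1)"
    by (simp add: char_poly_def det_tridiag)
  have size: "4*m + 1 = Suc (2*m) + Suc (2*m - 1)" and "Suc (2*m - 1) = 2*m"
    using assms(1) by simp_all
  \<comment> \<open>the centre entry \<open>\<eta> = 2/s2 = \<alpha> + (\<beta>1 - \<beta>2)\<close> closes the left block\<close>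
  moreover have "continuant d e (Suc (2*m)) = char_poly (Amat (2*m+1) \<beta>2 (\<beta>1 - \<beta>2) \<alpha> \<beta>1 \<beta>2)"
    and "continuant d e (2*m) = char_poly (Amat (2*m) \<beta>2 0 \<alpha> \<beta>1 \<beta>2)"
    and "continuant (\<lambda>i. d (i + Suc (2*m))) (\<lambda>i. e (i + Suc (2*m))) (2*m)
      = char_poly (Amat (2*m) 0 \<beta>2 \<alpha> \<beta>1 \<beta>2)"
    and "continuant (\<lambda>i. d (i + Suc (Suc (2*m)))) (\<lambda>i. e (i + Suc (Suc (2*m)))) (2*m - 1)
      = char_poly (Amat (2*m - 1) 0 \<beta>2 \<alpha> \<beta>2 \<beta>1)"
    unfolding char_poly_Amat Suc_eq_plus1
    by (rule continuant_cong;
        use assms(1) in \<open>auto simp: d_def e_def \<alpha>_def \<beta>1_def \<beta>2_def\<close>)+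
  moreover have "e (2*m) * e (2*m) = [:\<beta>2^2:]"
    by (simp add: e_def \<beta>2_def power2_eq_square)
  ultimately show ?thesis
    unfolding char_poly_C size continuant_split
    by (simp add: algebra_simps)
qed

theorem mainTheorem3:
  fixes s1 s2 :: real and m :: nat
  assumes "0 < s1" and "s1 < s2" and "2 \<le> m"
  defines "\<alpha> \<equiv> 1/s1 + 1/s2" and "\<beta>1 \<equiv> - 1/s1" and "\<beta>2 \<equiv> - 1/s2"
  shows "(\<forall>x::real. poly (char_poly (defect_cap s1 s2 m)) x =
            poly (char_poly (Amat (2*m) \<beta>2 0 \<alpha> \<beta>1 \<beta>2)) x *
            (((x - \<alpha> - \<beta>1) * Pstar \<alpha> \<beta>1 \<beta>2 m x
              + (\<beta>2 * (\<beta>1 - \<beta>2) * (x - \<alpha>) - \<beta>2 * \<beta>1^2 - (\<beta>1 - \<beta>2) * \<beta>2^2)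
                * Pstar \<alpha> \<beta>1 \<beta>2 (m - 1) x)
             - \<beta>2^2 * ((x - \<alpha> - \<beta>2) * Pstar \<alpha> \<beta>1 \<beta>2 (m - 1) x
                        - \<beta>2 * \<beta>1^2 * Pstar \<alpha> \<beta>1 \<beta>2 (m - 2) x)))
       \<and> char_poly (defect_cap s1 s2 m) =
            char_poly (Amat (2*m+1) \<beta>2 (\<beta>1 - \<beta>2) \<alpha> \<beta>1 \<beta>2) * char_poly (Amat (2*m) 0 \<beta>2 \<alpha> \<beta>1 \<beta>2)
            - [:\<beta>2^2:] * (char_poly (Amat (2*m) \<beta>2 0 \<alpha> \<beta>1 \<beta>2) * char_poly (Amat (2*m-1) 0 \<beta>2 \<alpha> \<beta>2 \<beta>1))
       \<and> char_poly (Amat (2*m) 0 \<beta>2 \<alpha> \<beta>1 \<beta>2) = char_poly (Amat (2*m) \<beta>2 0 \<alpha> \<beta>1 \<beta>2)"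
proof -
  have nonzero: "\<beta>1 \<noteq> 0" "\<beta>2 \<noteq> 0" using assms(1,2) by (auto simp: \<beta>1_def \<beta>2_def)
  have sizes: "1 \<le> m" "1 \<le> m - 1" "2*(m - 1) + 1 = 2*m - 1" "m - 1 - 1 = m - 2"
    using assms(3) by simp_all
  have halves: "char_poly (Amat (2*m) 0 \<beta>2 \<alpha> \<beta>1 \<beta>2) = char_poly (Amat (2*m) \<beta>2 0 \<alpha> \<beta>1 \<beta>2)"
    by (rule char_poly_Amat_swap_ends) simp
  note split = char_poly_defect_cap_split[OF sizes(1), of s1 s2, folded \<alpha>_def \<beta>1_def \<beta>2_def]
  have left: "poly (char_poly (Amat (2*m+1) \<beta>2 (\<beta>1 - \<beta>2) \<alpha> \<beta>1 \<beta>2)) x =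
      (x - \<alpha> - \<beta>1) * Pstar \<alpha> \<beta>1 \<beta>2 m x
      + (\<beta>2 * (\<beta>1 - \<beta>2) * (x - \<alpha>) - \<beta>2 * \<beta>1^2 - (\<beta>1 - \<beta>2) * \<beta>2^2) * Pstar \<alpha> \<beta>1 \<beta>2 (m - 1) x"
    for x using poly_char_poly_Amat_odd[OF nonzero sizes(1), of \<beta>2 "\<beta>1 - \<beta>2" \<alpha> x] by simp
  have right: "poly (char_poly (Amat (2*m - 1) 0 \<beta>2 \<alpha> \<beta>2 \<beta>1)) x =
      (x - \<alpha> - \<beta>2) * Pstar \<alpha> \<beta>1 \<beta>2 (m - 1) x - \<beta>2 * \<beta>1^2 * Pstar \<alpha> \<beta>1 \<beta>2 (m - 2) x"
    for x using poly_char_poly_Amat_odd[OF nonzero(2,1) sizes(2), of 0 \<beta>2 \<alpha> x]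
    unfolding sizes(3,4) Pstar_swap[of \<alpha> \<beta>2 \<beta>1] by simp
  have "poly (char_poly (defect_cap s1 s2 m)) x = poly (char_poly (Amat (2*m) \<beta>2 0 \<alpha> \<beta>1 \<beta>2)) x
      * (poly (char_poly (Amat (2*m+1) \<beta>2 (\<beta>1 - \<beta>2) \<alpha> \<beta>1 \<beta>2)) x
         - \<beta>2^2 * poly (char_poly (Amat (2*m - 1) 0 \<beta>2 \<alpha> \<beta>2 \<beta>1)) x)" for x
    unfolding split halves by (simp add: algebra_simps)
  then show ?thesis
    unfolding left right using split halves by blast
qed

end
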